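(* Let $L$ be a linear forest with $k$ vertices and let $P_n$ be the path with vertices $w_1,\dots,w_n$ in order. For an index $h$, let $s'_h(P_n,L)$ be the number of vertex subsets $X\subseteq V(P_n)$ with $w_h\in X$ such that $P_n[X]$ is isomorphic to $L$ and $w_h$ is an isolated vertex of $P_n[X]$. Then $s'_h(P_n,L)$ has the same value for all $h$ with $k\le h\le n-k+1$.
   Context: A linear forest is a disjoint union of paths; $P_n[X]$ denotes the subgraph of $P_n$ induced by $X$. *)

theory Defs
  imports Main
begin

type_synonym 'a graph = "'a set \<times> 'a set set"

definition verts :: "'a graph \<Rightarrow> 'a set" where "verts G = fst G"
definition edges :: "'a graph \<Rightarrow> 'a set set" where "edges G = snd G"

definition simple_graph :: "'a graph \<Rightarrow> bool" where
  "simple_graph G \<longleftrightarrow> finite (verts G) \<and>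
     (\<forall>e\<in>edges G. \<exists>u v. u \<in> verts G \<and> v \<in> verts G \<and> u \<noteq> v \<and> e = {u, v})"

definition induced :: "'a graph \<Rightarrow> 'a set \<Rightarrow> 'a graph" where
  "induced G X = (X \<inter> verts G, {e \<in> edges G. e \<subseteq> X})"

definition graph_iso :: "'a graph \<Rightarrow> 'b graph \<Rightarrow> bool" where
  "graph_iso G H \<longleftrightarrow> (\<exists>f. bij_betw f (verts G) (verts H) \<and>
     (\<forall>u\<in>verts G. \<forall>v\<in>verts G. {u, v} \<in> edges G \<longleftrightarrow> {f u, f v} \<in> edges H))"

text \<open>The path P_n with vertices w_1, ..., w_n (w_i = i) in order.\<close>
definition path_graph :: "nat \<Rightarrow> nat graph" where
  "path_graph n = ({1..n}, {{i, i + 1} | i. 1 \<le> i \<and> i < n})"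

definition is_path :: "'a graph \<Rightarrow> bool" where
  "is_path G \<longleftrightarrow> (\<exists>m\<ge>1. graph_iso (path_graph m) G)"

definition linear_forest :: "'a graph \<Rightarrow> bool" where
  "linear_forest G \<longleftrightarrow> simple_graph G \<and>
     (\<exists>\<C>. \<Union>\<C> = verts G \<and> (\<forall>C\<in>\<C>. \<forall>D\<in>\<C>. C \<noteq> D \<longrightarrow> C \<inter> D = {}) \<and>
          (\<forall>C\<in>\<C>. is_path (induced G C)) \<and>
          (\<forall>e\<in>edges G. \<exists>C\<in>\<C>. e \<subseteq> C))"

definition isolated_in :: "'a \<Rightarrow> 'a graph \<Rightarrow> bool" where
  "isolated_in v G \<longleftrightarrow> v \<in> verts G \<and> (\<forall>e\<in>edges G. v \<notin> e)"

definition s_prime :: "nat \<Rightarrow> nat \<Rightarrow> 'b graph \<Rightarrow> nat" where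
  "s_prime h n L = card {X. X \<subseteq> verts (path_graph n) \<and> h \<in> X \<and>
       graph_iso (induced (path_graph n) X) L \<and> isolated_in h (induced (path_graph n) X)}"

end

theory Submission
  imports Defs
begin

text \<open>
  Call a property P of finite sets of naturals invariant if it only depends on the isomorphism type
  of the subgraph induced by the set in the path 0 - 1 - 2 - \<dots>, and suppose that all sets
  satisfying P have m elements. Then the number of P-sets Y \<subseteq> {1..N} containing p is the same
  for all m \<le> p \<le> N + 1 - m. By strong induction on m: sort these sets by the maximal run
  {a..<a + s} of Y through p. Cutting out this run and closing the gap is a bijection onto the sets
  R \<subseteq> {1..N - s - 1} avoiding a - 1 such that R, together with one extra component of size s
  far away, satisfies P. That is an invariant property Q of (m - s)-sets, so the number of sets
  with this run is the number of all Q-sets minus the number of Q-sets through a - 1, which by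
  induction does not depend on a. Finally, s'_h(P_n, L) is the number of such sets with the
  single-vertex run {h}, for P = "induces a graph isomorphic to L".
\<close>

lemma graph_iso_refl: "graph_iso G G"
  unfolding graph_iso_def by (rule exI[of _ id]) auto

lemma graph_iso_sym:
  assumes "graph_iso G H"
  shows "graph_iso H G"
proof -
  obtain f where f: "bij_betw f (verts G) (verts H)"
    "\<forall>u\<in>verts G. \<forall>v\<in>verts G. {u, v} \<in> edges G \<longleftrightarrow> {f u, f v} \<in> edges H"
    using assms unfolding graph_iso_def by blast
  let ?g = "inv_into (verts G) f"
  have "bij_betw ?g (verts H) (verts G)"
    using f(1) by (rule bij_betw_inv_into)
  moreover have "{u, v} \<in> edges H \<longleftrightarrow> {?g u, ?g v} \<in> edges G"
    if "u \<in> verts H" "v \<in> verts H" for u v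
  proof -
    have "?g u \<in> verts G" "?g v \<in> verts G" "f (?g u) = u" "f (?g v) = v"
      using f(1) that by (auto simp: bij_betw_def inv_into_into f_inv_into_f)
    then show ?thesis using f(2) by metis
  qed
  ultimately show ?thesis unfolding graph_iso_def by blast
qed

lemma graph_iso_trans:
  assumes "graph_iso G H" "graph_iso H K"
  shows "graph_iso G K"
proof -
  obtain f where f: "bij_betw f (verts G) (verts H)"
    "\<forall>u\<in>verts G. \<forall>v\<in>verts G. {u, v} \<in> edges G \<longleftrightarrow> {f u, f v} \<in> edges H"
    using assms(1) unfolding graph_iso_def by blast
  obtain g where g: "bij_betw g (verts H) (verts K)"
    "\<forall>u\<in>verts H. \<forall>v\<in>verts H. {u, v} \<in> edges H \<longleftrightarrow> {g u, g v} \<in> edges K"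
    using assms(2) unfolding graph_iso_def by blast
  have "bij_betw (g \<circ> f) (verts G) (verts K)"
    using f(1) g(1) by (rule bij_betw_trans)
  moreover have "\<forall>u\<in>verts G. \<forall>v\<in>verts G. {u, v} \<in> edges G \<longleftrightarrow> {(g \<circ> f) u, (g \<circ> f) v} \<in> edges K"
    using f g bij_betwE[OF f(1)] by simp
  ultimately show ?thesis unfolding graph_iso_def by blast
qed

lemma graph_iso_card_verts:
  assumes "graph_iso G H"
  shows "card (verts G) = card (verts H)" "finite (verts G) \<longleftrightarrow> finite (verts H)"
  using assms bij_betw_same_card bij_betw_finite unfolding graph_iso_def by blast+

definition nat_path :: "nat set \<Rightarrow> nat graph" where
  "nat_path X = (X, {{u, u + 1} | u. u \<in> X \<and> u + 1 \<in> X})"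

abbreviation nat_path_iso :: "nat set \<Rightarrow> nat set \<Rightarrow> bool" where
  "nat_path_iso X Y \<equiv> graph_iso (nat_path X) (nat_path Y)"

definition line_adj :: "nat \<Rightarrow> nat \<Rightarrow> bool" where
  "line_adj u v \<longleftrightarrow> u + 1 = v \<or> v + 1 = u"

lemma verts_nat_path [simp]: "verts (nat_path X) = X"
  unfolding nat_path_def verts_def by simp

lemma edge_nat_path_iff:
  "u \<in> X \<Longrightarrow> v \<in> X \<Longrightarrow> {u, v} \<in> edges (nat_path X) \<longleftrightarrow> line_adj u v"
  unfolding nat_path_def edges_def line_adj_def by (auto simp: doubleton_eq_iff)

lemma nat_path_iso_iff:
  "nat_path_iso X Y \<longleftrightarrow>
     (\<exists>f. bij_betw f X Y \<and> (\<forall>u\<in>X. \<forall>v\<in>X. line_adj u v \<longleftrightarrow> line_adj (f u) (f v)))"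
proof -
  have "(\<forall>u\<in>X. \<forall>v\<in>X. {u, v} \<in> edges (nat_path X) \<longleftrightarrow> {f u, f v} \<in> edges (nat_path Y)) \<longleftrightarrow>
        (\<forall>u\<in>X. \<forall>v\<in>X. line_adj u v \<longleftrightarrow> line_adj (f u) (f v))" if "bij_betw f X Y" for f
    using edge_nat_path_iff bij_betwE[OF that] by metis
  then show ?thesis unfolding graph_iso_def verts_nat_path by blast
qed

lemma verts_path_graph: "verts (path_graph n) = {1..n}"
  unfolding path_graph_def verts_def by simp

lemma induced_path_graph:
  assumes "X \<subseteq> {1..n}"
  shows "induced (path_graph n) X = nat_path X"
proof -
  have "{e \<in> {{i, i + 1} | i. 1 \<le> i \<and> i < n}. e \<subseteq> X} = {{u, u + 1} | u. u \<in> X \<and> u + 1 \<in> X}"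
    using assms by (fastforce simp: Suc_le_eq)
  moreover have "X \<inter> {1..n} = X" using assms by auto
  ultimately show ?thesis
    unfolding induced_def path_graph_def nat_path_def verts_def edges_def by simp
qed

lemma isolated_in_nat_path:
  assumes "1 \<le> h"
  shows "isolated_in h (nat_path X) \<longleftrightarrow> h \<in> X \<and> h - 1 \<notin> X \<and> h + 1 \<notin> X"
proof -
  obtain j where "h = Suc j" using assms by (cases h) auto
  then show ?thesis
    unfolding isolated_in_def nat_path_def verts_def edges_def by auto
qed

lemma nat_path_iso_Un:
  assumes "nat_path_iso A A'" "nat_path_iso B B'" "A \<inter> B = {}" "A' \<inter> B' = {}"
    and "\<forall>x\<in>A. \<forall>y\<in>B. \<not> line_adj x y" "\<forall>x\<in>A'. \<forall>y\<in>B'. \<not> line_adj x y"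
  shows "nat_path_iso (A \<union> B) (A' \<union> B')"
proof -
  obtain f where f: "bij_betw f A A'" "\<forall>u\<in>A. \<forall>v\<in>A. line_adj u v \<longleftrightarrow> line_adj (f u) (f v)"
    using assms(1) unfolding nat_path_iso_iff by blast
  obtain g where g: "bij_betw g B B'" "\<forall>u\<in>B. \<forall>v\<in>B. line_adj u v \<longleftrightarrow> line_adj (g u) (g v)"
    using assms(2) unfolding nat_path_iso_iff by blast
  define h where "h x = (if x \<in> A then f x else g x)" for x
  have hA: "bij_betw h A A'"
    using f(1) by (rule bij_betw_cong[THEN iffD1, rotated]) (simp add: h_def)
  have "\<forall>x\<in>B. h x = g x" using assms(3) by (auto simp: h_def)
  then have hB: "bij_betw h B B'"
    using g(1) bij_betw_cong by metis
  have sym: "line_adj x y \<longleftrightarrow> line_adj y x" for x y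
    unfolding line_adj_def by auto
  have "bij_betw h (A \<union> B) (A' \<union> B')"
    using hA hB assms(4) by (rule bij_betw_combine)
  moreover have "line_adj u v \<longleftrightarrow> line_adj (h u) (h v)" if "u \<in> A \<union> B" "v \<in> A \<union> B" for u v
    using that f(2) g(2) assms(3,5,6) bij_betwE[OF hA] bij_betwE[OF hB] sym
    by (cases "u \<in> A"; cases "v \<in> A") (auto simp: h_def)
  ultimately show ?thesis unfolding nat_path_iso_iff by blast
qed

lemma nat_path_iso_shift: "nat_path_iso A ((\<lambda>x. x + d) ` A)"
  unfolding nat_path_iso_iff
  by (rule exI[of _ "\<lambda>x. x + d"]) (auto simp: bij_betw_def inj_on_def line_adj_def)

lemma nat_path_iso_intervals: "nat_path_iso {a..<a + s} {c..<c + s}"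
proof -
  have "{b..<b + s} = (\<lambda>x. x + b) ` {0..<s}" for b
    by (simp add: add.commute)
  then show ?thesis
    using graph_iso_trans[OF graph_iso_sym[OF nat_path_iso_shift] nat_path_iso_shift] by metis
qed

definition iso_invariant :: "(nat set \<Rightarrow> bool) \<Rightarrow> bool" where
  "iso_invariant P \<longleftrightarrow> (\<forall>X Y. nat_path_iso X Y \<longrightarrow> P X \<longrightarrow> P Y)"

text \<open>R \<union> block_after s R is R together with one extra component on s vertices.\<close>
definition block_after :: "nat \<Rightarrow> nat set \<Rightarrow> nat set" where
  "block_after s R = {Max (insert 0 R) + 2 ..< Max (insert 0 R) + 2 + s}"

definition with_block :: "nat \<Rightarrow> (nat set \<Rightarrow> bool) \<Rightarrow> nat set \<Rightarrow> bool" where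
  "with_block s P R \<longleftrightarrow> finite R \<and> P (R \<union> block_after s R)"

lemma block_after_far:
  assumes "finite R" "x \<in> R" "y \<in> block_after s R"
  shows "x + 2 \<le> y"
proof -
  have "x \<le> Max (insert 0 R)" using assms(1,2) by simp
  then show ?thesis using assms(3) unfolding block_after_def by auto
qed

lemma card_Un_block_after:
  assumes "finite R"
  shows "card (R \<union> block_after s R) = card R + s"
proof -
  have "R \<inter> block_after s R = {}" using block_after_far[OF assms] by force
  then show ?thesis using assms by (simp add: card_Un_disjoint block_after_def)
qed

lemma nat_path_iso_Un_block_after:
  assumes "nat_path_iso R' R" "finite R"
    and "R' \<inter> {a..<a + s} = {}" "\<forall>x\<in>R'. \<forall>y\<in>{a..<a + s}. \<not> line_adj x y"
  shows "nat_path_iso (R' \<union> {a..<a + s}) (R \<union> block_after s R)"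
proof (rule nat_path_iso_Un[OF assms(1) _ assms(3) _ assms(4)])
  show "nat_path_iso {a..<a + s} (block_after s R)"
    unfolding block_after_def by (rule nat_path_iso_intervals)
  show "R \<inter> block_after s R = {}" "\<forall>x\<in>R. \<forall>y\<in>block_after s R. \<not> line_adj x y"
    using block_after_far[OF assms(2)] unfolding line_adj_def by force+
qed

lemma iso_invariant_with_block:
  assumes "iso_invariant P"
  shows "iso_invariant (with_block s P)"
  unfolding iso_invariant_def
proof (intro allI impI)
  fix R R' assume iso: "nat_path_iso R R'" and "with_block s P R"
  then have fin: "finite R" "finite R'" and P: "P (R \<union> block_after s R)"
    using graph_iso_card_verts(2)[OF iso] unfolding with_block_def by auto
  obtain b where b: "block_after s R = {b..<b + s}"
    unfolding block_after_def by blast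
  have "nat_path_iso (R \<union> block_after s R) (R' \<union> block_after s R')"
    unfolding b using iso fin block_after_far[OF fin(1), of _ _ s, unfolded b]
    by (intro nat_path_iso_Un_block_after) (force simp: line_adj_def)+
  then show "with_block s P R'"
    using assms P fin(2) unfolding iso_invariant_def with_block_def by blast
qed

lemma card_with_block:
  assumes "\<And>Y. P Y \<Longrightarrow> finite Y \<and> card Y = m" "with_block s P R"
  shows "finite R \<and> card R = m - s"
  using assms card_Un_block_after unfolding with_block_def by fastforce

definition run_sets :: "nat \<Rightarrow> nat \<Rightarrow> nat \<Rightarrow> nat set set" where
  "run_sets N a s = {Y. Y \<subseteq> {1..N} \<and> {a..<a + s} \<subseteq> Y \<and> a - 1 \<notin> Y \<and> a + s \<notin> Y}"

definition insert_run :: "nat \<Rightarrow> nat \<Rightarrow> nat set \<Rightarrow> nat set" where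
  "insert_run a s R = {x \<in> R. x < a} \<union> {a..<a + s} \<union> (\<lambda>x. x + (s + 1)) ` {x \<in> R. a \<le> x}"

definition delete_run :: "nat \<Rightarrow> nat \<Rightarrow> nat set \<Rightarrow> nat set" where
  "delete_run a s Y = {x \<in> Y. x < a} \<union> (\<lambda>x. x - (s + 1)) ` {x \<in> Y. a + s < x}"

lemma mem_insert_run:
  "x \<in> insert_run a s R \<longleftrightarrow>
     (x < a \<and> x \<in> R) \<or> (a \<le> x \<and> x < a + s) \<or> (a + s < x \<and> x - (s + 1) \<in> R)"
proof (cases "a + s < x")
  case True
  then have "x = (x - (s + 1)) + (s + 1)" by simp
  moreover have "x - (s + 1) \<in> R \<Longrightarrow> a \<le> x - (s + 1)" using True by simp
  ultimately show ?thesis using True unfolding insert_run_def by force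
qed (auto simp: insert_run_def)

lemma mem_delete_run:
  "x \<in> delete_run a s Y \<longleftrightarrow> (x < a \<and> x \<in> Y) \<or> (a \<le> x \<and> x + (s + 1) \<in> Y)"
proof (cases "x < a")
  case False
  then have "x = (x + (s + 1)) - (s + 1)" by simp
  with False show ?thesis unfolding delete_run_def by force
qed (auto simp: delete_run_def)

lemma bij_betw_insert_run:
  assumes "1 \<le> a" "a + s \<le> N + 1"
  shows "bij_betw (insert_run a s) {R. R \<subseteq> {1..N - s - 1} \<and> a - 1 \<notin> R} (run_sets N a s)"
proof (rule bij_betw_byWitness[where f' = "delete_run a s"])
  show "\<forall>R\<in>{R. R \<subseteq> {1..N - s - 1} \<and> a - 1 \<notin> R}. delete_run a s (insert_run a s R) = R"
  proof (intro ballI set_eqI)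
    fix R x
    show "x \<in> delete_run a s (insert_run a s R) \<longleftrightarrow> x \<in> R"
      unfolding mem_delete_run mem_insert_run by (cases "x < a") auto
  qed
  show "\<forall>Y\<in>run_sets N a s. insert_run a s (delete_run a s Y) = Y"
  proof
    fix Y assume "Y \<in> run_sets N a s"
    then have "x \<in> insert_run a s (delete_run a s Y) \<longleftrightarrow> x \<in> Y" for x
      unfolding run_sets_def mem_delete_run mem_insert_run
      by (cases "x < a"; cases "a + s < x"; cases "x = a + s") (auto simp: not_less)
    then show "insert_run a s (delete_run a s Y) = Y" by blast
  qed
  show "insert_run a s ` {R. R \<subseteq> {1..N - s - 1} \<and> a - 1 \<notin> R} \<subseteq> run_sets N a s"
    using assms by (fastforce simp: run_sets_def mem_insert_run)
  show "delete_run a s ` run_sets N a s \<subseteq> {R. R \<subseteq> {1..N - s - 1} \<and> a - 1 \<notin> R}"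
  proof (rule image_subsetI)
    fix Y assume Y: "Y \<in> run_sets N a s"
    have "delete_run a s Y \<subseteq> {1..N - s - 1}"
    proof
      fix x assume "x \<in> delete_run a s Y"
      then have "(x < a \<and> x \<noteq> a - 1 \<and> x \<in> Y) \<or> (a \<le> x \<and> x + (s + 1) \<in> Y)"
        using Y unfolding mem_delete_run run_sets_def by auto
      then show "x \<in> {1..N - s - 1}"
        using Y assms unfolding run_sets_def by auto
    qed
    moreover have "a - 1 \<notin> delete_run a s Y"
      using Y assms unfolding mem_delete_run run_sets_def by auto
    ultimately show "delete_run a s Y \<in> {R. R \<subseteq> {1..N - s - 1} \<and> a - 1 \<notin> R}"
      by blast
  qed
qed

lemma nat_path_iso_insert_run:
  assumes "finite R" "a - 1 \<notin> R"
  shows "nat_path_iso (insert_run a s R) (R \<union> block_after s R)"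
proof -
  define A where "A = {x \<in> R. x < a}"
  define B where "B = {x \<in> R. a \<le> x}"
  define B' where "B' = (\<lambda>x. x + (s + 1)) ` B"
  have below: "x + 1 < a" if "x \<in> A" for x
    using that assms(2) unfolding A_def by (cases "x + 1 = a") auto
  have above: "a + s < y" if "y \<in> B'" for y
    using that unfolding B'_def B_def by auto
  have "nat_path_iso (A \<union> B') (A \<union> B)"
  proof (rule nat_path_iso_Un[OF graph_iso_refl])
    show "nat_path_iso B' B"
      unfolding B'_def by (rule graph_iso_sym[OF nat_path_iso_shift])
    show "A \<inter> B' = {}" "\<forall>x\<in>A. \<forall>y\<in>B'. \<not> line_adj x y"
      using below above unfolding line_adj_def by force+
    show "A \<inter> B = {}" "\<forall>x\<in>A. \<forall>y\<in>B. \<not> line_adj x y"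
      using below unfolding B_def line_adj_def by force+
  qed
  moreover have "A \<union> B = R" by (auto simp: A_def B_def)
  ultimately have "nat_path_iso ((A \<union> B') \<union> {a..<a + s}) (R \<union> block_after s R)"
  proof (intro nat_path_iso_Un_block_after)
    show "(A \<union> B') \<inter> {a..<a + s} = {}" "\<forall>x\<in>A \<union> B'. \<forall>y\<in>{a..<a + s}. \<not> line_adj x y"
      using below above unfolding line_adj_def by force+
  qed (use assms(1) in simp_all)
  moreover have "insert_run a s R = (A \<union> B') \<union> {a..<a + s}"
    unfolding insert_run_def A_def B_def B'_def by auto
  ultimately show ?thesis by simp
qed

lemma card_filter_bij_betw:
  assumes "bij_betw f A B"
  shows "card {y \<in> B. P y} = card {x \<in> A. P (f x)}"
proof -
  have "{y \<in> B. P y} = f ` {x \<in> A. P (f x)}"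
    using assms unfolding bij_betw_def by blast
  moreover have "inj_on f {x \<in> A. P (f x)}"
    using assms unfolding bij_betw_def by (simp add: inj_on_def)
  ultimately show ?thesis by (simp add: card_image)
qed

definition count_through :: "(nat set \<Rightarrow> bool) \<Rightarrow> nat \<Rightarrow> nat \<Rightarrow> nat" where
  "count_through P N p = card {Y. Y \<subseteq> {1..N} \<and> p \<in> Y \<and> P Y}"

lemma card_run_sets:
  assumes "iso_invariant P" "1 \<le> a" "a + s \<le> N + 1"
  shows "card {Y \<in> run_sets N a s. P Y} =
    card {R. R \<subseteq> {1..N - s - 1} \<and> with_block s P R} - count_through (with_block s P) (N - s - 1) (a - 1)"
proof -
  let ?M = "N - s - 1"
  have "P (insert_run a s R) \<longleftrightarrow> with_block s P R" if "R \<subseteq> {1..?M}" "a - 1 \<notin> R" for R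
  proof -
    have "finite R" using that(1) finite_subset by blast
    then show ?thesis
      using nat_path_iso_insert_run[OF _ that(2)] graph_iso_sym assms(1)
      unfolding iso_invariant_def with_block_def by blast
  qed
  then have "{R \<in> {R. R \<subseteq> {1..?M} \<and> a - 1 \<notin> R}. P (insert_run a s R)} =
      {R. R \<subseteq> {1..?M} \<and> a - 1 \<notin> R \<and> with_block s P R}"
    by blast
  then have "card {Y \<in> run_sets N a s. P Y} = card {R. R \<subseteq> {1..?M} \<and> a - 1 \<notin> R \<and> with_block s P R}"
    using card_filter_bij_betw[OF bij_betw_insert_run[OF assms(2,3)], of P] by simp
  also have "{R. R \<subseteq> {1..?M} \<and> a - 1 \<notin> R \<and> with_block s P R} =
      {R. R \<subseteq> {1..?M} \<and> with_block s P R} - {R. R \<subseteq> {1..?M} \<and> a - 1 \<in> R \<and> with_block s P R}"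
    by blast
  also have "card \<dots> = card {R. R \<subseteq> {1..?M} \<and> with_block s P R} - count_through (with_block s P) ?M (a - 1)"
    unfolding count_through_def
    by (rule card_Diff_subset) (auto intro: finite_subset[of _ "Pow {1..?M}"])
  finally show ?thesis .
qed

lemma maximal_run_exists:
  assumes "Y \<subseteq> {1..N}" "p \<in> Y"
  obtains a s where "a \<le> p" "p < a + s" "Y \<in> run_sets N a s"
proof -
  define S where "S = {x. x \<le> p \<and> {x..p} \<subseteq> Y}"
  define T where "T = {x. p \<le> x \<and> {p..x} \<subseteq> Y}"
  have "finite S" unfolding S_def by (rule finite_subset[of _ "{..p}"]) auto
  moreover have "T \<subseteq> {..N}"
  proof
    fix x assume "x \<in> T"
    then have "x \<in> Y" unfolding T_def by auto
    then show "x \<in> {..N}" using assms(1) by auto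
  qed
  then have "finite T" by (rule finite_subset) simp
  moreover have "p \<in> S" "p \<in> T" using assms(2) unfolding S_def T_def by auto
  ultimately have a: "Min S \<in> S" and b: "Max T \<in> T" and
    a_min: "\<And>x. x \<in> S \<Longrightarrow> Min S \<le> x" and b_max: "\<And>x. x \<in> T \<Longrightarrow> x \<le> Max T"
    by (auto intro: Min_in Max_in)
  define a where "a = Min S"
  define b where "b = Max T"
  have left: "{a..p} \<subseteq> Y" "a \<le> p" and right: "{p..b} \<subseteq> Y" "p \<le> b"
    using a b unfolding a_def b_def S_def T_def by auto
  moreover have "{a..b} = {a..p} \<union> {p..b}"
    using left(2) right(2) by auto
  ultimately have run: "{a..b} \<subseteq> Y" "a \<le> p" "p \<le> b" by auto
  then have "a \<in> Y" by auto
  then have "1 \<le> a" using assms(1) by auto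
  have "a - 1 \<notin> Y"
  proof
    assume "a - 1 \<in> Y"
    moreover have "{a - 1..p} = insert (a - 1) {a..p}"
      using \<open>1 \<le> a\<close> run(2) by auto
    ultimately have "a - 1 \<in> S"
      using left unfolding S_def by auto
    then show False using a_min \<open>1 \<le> a\<close> unfolding a_def by fastforce
  qed
  moreover have "b + 1 \<notin> Y"
  proof
    assume "b + 1 \<in> Y"
    moreover have "{p..b + 1} = insert (b + 1) {p..b}"
      using run(3) by auto
    ultimately have "b + 1 \<in> T"
      using right unfolding T_def by auto
    then show False using b_max unfolding b_def by fastforce
  qed
  ultimately have "Y \<in> run_sets N a (b + 1 - a)"
    using run assms(1) unfolding run_sets_def by auto
  moreover have "p < a + (b + 1 - a)" using run by simp
  ultimately show ?thesis using that run by blast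
qed

lemma maximal_run_unique:
  assumes "Y \<in> run_sets N a s" "Y \<in> run_sets N a' s'"
    and "a \<le> p" "p < a + s" "a' \<le> p" "p < a' + s'"
  shows "a = a' \<and> s = s'"
proof -
  have Y: "{a..<a + s} \<subseteq> Y" "a - 1 \<notin> Y" "a + s \<notin> Y"
    and Y': "{a'..<a' + s'} \<subseteq> Y" "a' - 1 \<notin> Y" "a' + s' \<notin> Y"
    and pos: "1 \<le> a" "1 \<le> a'"
    using assms unfolding run_sets_def by force+
  have "a = a'"
  proof (rule ccontr)
    assume "a \<noteq> a'"
    then have "a' - 1 \<in> {a..<a + s} \<or> a - 1 \<in> {a'..<a' + s'}"
      using assms(3-6) pos by auto
    then show False using Y Y' by auto
  qed
  moreover have "s = s'"
  proof (rule ccontr)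
    assume "s \<noteq> s'"
    then have "a + s \<in> {a'..<a' + s'} \<or> a' + s' \<in> {a..<a + s}"
      using \<open>a = a'\<close> by auto
    then show False using Y Y' by auto
  qed
  ultimately show ?thesis ..
qed

lemma count_through_eq_sum:
  assumes "\<And>Y. P Y \<Longrightarrow> finite Y \<and> card Y = m" "m \<le> p"
  shows "count_through P N p = (\<Sum>(s, t)\<in>Sigma {1..m} (\<lambda>s. {..<s}). card {Y \<in> run_sets N (p - t) s. P Y})"
proof -
  define I where "I = Sigma {1..m} (\<lambda>s. {..<s})"
  define A where "A = (\<lambda>(s, t). {Y \<in> run_sets N (p - t) s. P Y})"
  have "{Y. Y \<subseteq> {1..N} \<and> p \<in> Y \<and> P Y} \<subseteq> (\<Union>i\<in>I. A i)"
  proof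
    fix Y assume Y: "Y \<in> {Y. Y \<subseteq> {1..N} \<and> p \<in> Y \<and> P Y}"
    then obtain a s where run: "a \<le> p" "p < a + s" "Y \<in> run_sets N a s"
      using maximal_run_exists[of Y N p] by blast
    have "s = card {a..<a + s}" by simp
    also have "\<dots> \<le> card Y"
      using run(3) assms(1) Y by (intro card_mono) (auto simp: run_sets_def)
    finally have "(s, p - a) \<in> I" using run(1,2) assms(1) Y unfolding I_def by auto
    moreover have "Y \<in> A (s, p - a)"
      using run Y unfolding A_def by auto
    ultimately show "Y \<in> (\<Union>i\<in>I. A i)" by blast
  qed
  moreover have "A i \<subseteq> {Y. Y \<subseteq> {1..N} \<and> p \<in> Y \<and> P Y}" if "i \<in> I" for i
    using that assms(2) unfolding I_def A_def run_sets_def by auto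
  ultimately have "{Y. Y \<subseteq> {1..N} \<and> p \<in> Y \<and> P Y} = (\<Union>i\<in>I. A i)"
    by blast
  moreover have "card (\<Union>i\<in>I. A i) = (\<Sum>i\<in>I. card (A i))"
  proof (rule card_UN_disjoint)
    show "finite I" unfolding I_def by auto
    show "\<forall>i\<in>I. finite (A i)"
      unfolding A_def run_sets_def by (auto intro: finite_subset[of _ "Pow {1..N}"])
    show "\<forall>i\<in>I. \<forall>j\<in>I. i \<noteq> j \<longrightarrow> A i \<inter> A j = {}"
    proof (intro ballI impI)
      fix i j assume ij: "i \<in> I" "j \<in> I" "i \<noteq> j"
      obtain s t s' t' where i: "i = (s, t)" and j: "j = (s', t')" by fastforce
      have st: "s \<le> m" "t < s" "s' \<le> m" "t' < s'"
        using ij unfolding i j I_def by auto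
      show "A i \<inter> A j = {}"
      proof (rule ccontr)
        assume "A i \<inter> A j \<noteq> {}"
        then obtain Y where Y: "Y \<in> run_sets N (p - t) s" "Y \<in> run_sets N (p - t') s'"
          unfolding A_def i j by auto
        have "p - t = p - t' \<and> s = s'"
          using st assms(2) by (intro maximal_run_unique[OF Y, of p]) auto
        then show False using ij(3) st assms(2) unfolding i j by auto
      qed
    qed
  qed
  ultimately show ?thesis unfolding count_through_def I_def A_def by (simp add: split_def)
qed

lemma count_through_const:
  assumes "iso_invariant P" "\<And>Y. P Y \<Longrightarrow> finite Y \<and> card Y = m"
    and "m \<le> p" "p + m \<le> N + 1" "m \<le> p'" "p' + m \<le> N + 1"
  shows "count_through P N p = count_through P N p'"
  using assms
proof (induction m arbitrary: P N p p' rule: less_induct)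
  case (less m)
  have "card {Y \<in> run_sets N (p - t) s. P Y} = card {Y \<in> run_sets N (p' - t) s. P Y}"
    if st: "1 \<le> s" "s \<le> m" "t < s" for s t
  proof -
    let ?Q = "with_block s P"
    have "count_through ?Q (N - s - 1) (p - t - 1) = count_through ?Q (N - s - 1) (p' - t - 1)"
    proof (rule less.IH[of "m - s"])
      show "iso_invariant ?Q" using less.prems(1) by (rule iso_invariant_with_block)
      show "?Q Y \<Longrightarrow> finite Y \<and> card Y = m - s" for Y
        using card_with_block less.prems(2) by blast
    qed (use st less.prems(3-6) in linarith)+
    then show ?thesis
      using st less.prems by (simp add: card_run_sets diff_diff_add)
  qed
  note runs_eq = this
  have "count_through P N p = (\<Sum>(s, t)\<in>Sigma {1..m} (\<lambda>s. {..<s}). card {Y \<in> run_sets N (p - t) s. P Y})"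
    using less.prems by (intro count_through_eq_sum) auto
  also have "\<dots> = (\<Sum>(s, t)\<in>Sigma {1..m} (\<lambda>s. {..<s}). card {Y \<in> run_sets N (p' - t) s. P Y})"
    using runs_eq by (intro sum.cong) auto
  also have "\<dots> = count_through P N p'"
    using less.prems by (intro count_through_eq_sum[symmetric]) auto
  finally show ?case .
qed

lemma iso_invariant_graph_iso: "iso_invariant (\<lambda>Y. graph_iso (nat_path Y) L)"
  unfolding iso_invariant_def using graph_iso_sym graph_iso_trans by blast

lemma s_prime_eq_card_run_sets:
  assumes "1 \<le> h"
  shows "s_prime h n L = card {Y \<in> run_sets n h 1. graph_iso (nat_path Y) L}"
proof -
  have "X \<subseteq> {1..n} \<and> h \<in> X \<and> graph_iso (induced (path_graph n) X) L \<and>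
      isolated_in h (induced (path_graph n) X) \<longleftrightarrow>
    X \<in> run_sets n h 1 \<and> graph_iso (nat_path X) L" for X
    using induced_path_graph[of X n] isolated_in_nat_path[OF assms, of X]
    unfolding run_sets_def by auto
  then show ?thesis
    unfolding s_prime_def verts_path_graph by simp
qed

lemma s_prime_eq_card_minus_count:
  fixes L :: "'b graph"
  assumes "1 \<le> h" "h \<le> n"
  defines "Q \<equiv> with_block 1 (\<lambda>Y. graph_iso (nat_path Y) L)"
  shows "s_prime h n L = card {R. R \<subseteq> {1..n - 2} \<and> Q R} - count_through Q (n - 2) (h - 1)"
proof -
  have "s_prime h n L = card {Y \<in> run_sets n h 1. graph_iso (nat_path Y) L}"
    using assms(1) by (rule s_prime_eq_card_run_sets)
  also have "\<dots> = card {R. R \<subseteq> {1..n - 1 - 1} \<and> Q R} - count_through Q (n - 1 - 1) (h - 1)"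
    unfolding Q_def using assms(1,2) by (intro card_run_sets iso_invariant_graph_iso) auto
  finally show ?thesis by (simp add: numeral_2_eq_2)
qed

lemma s_prime_eq_0:
  assumes "card (verts L) = 0"
  shows "s_prime h n L = 0"
proof -
  have "\<not> graph_iso (induced (path_graph n) X) L" if "X \<subseteq> {1..n}" "h \<in> X" for X
  proof
    assume "graph_iso (induced (path_graph n) X) L"
    then have "card X = 0"
      using graph_iso_card_verts(1)[of "nat_path X" L] assms
      unfolding induced_path_graph[OF that(1)] by simp
    then show False using that finite_subset by fastforce
  qed
  then have "{X. X \<subseteq> verts (path_graph n) \<and> h \<in> X \<and> graph_iso (induced (path_graph n) X) L \<and>
      isolated_in h (induced (path_graph n) X)} = {}"
    by (auto simp: verts_path_graph)
  then show ?thesis unfolding s_prime_def by (simp only: card.empty)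
qed

theorem lemma2p3:
  fixes L :: "'b graph" and n k h h' :: nat
  assumes "linear_forest L" and "card (verts L) = k"
    and "k \<le> h" and "h + k \<le> n + 1"
    and "k \<le> h'" and "h' + k \<le> n + 1"
  shows "s_prime h n L = s_prime h' n L"
proof (cases "k = 0")
  case True
  then show ?thesis using s_prime_eq_0 assms(2) by metis
next
  case False
  let ?Q = "with_block 1 (\<lambda>Y. graph_iso (nat_path Y) L)"
  have "finite (verts L)" using False assms(2) by (intro card_ge_0_finite) simp
  then have "finite Y \<and> card Y = k" if "graph_iso (nat_path Y) L" for Y
    using graph_iso_card_verts[OF that] assms(2) by simp
  then have card_Q: "finite R \<and> card R = k - 1" if "?Q R" for R
    using card_with_block[of "\<lambda>Y. graph_iso (nat_path Y) L", OF _ that] by blast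
  have "count_through ?Q (n - 2) (h - 1) = count_through ?Q (n - 2) (h' - 1)"
    using False assms(3-6)
    by (intro count_through_const[OF iso_invariant_with_block[OF iso_invariant_graph_iso] card_Q]) linarith+
  moreover have "1 \<le> h" "h \<le> n" "1 \<le> h'" "h' \<le> n"
    using False assms(3-6) by linarith+
  ultimately show ?thesis by (simp add: s_prime_eq_card_minus_count)
qed

end
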